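(* Let $\mathcal B$ be an extriangulated category with enough injectives. If a subcategory $\mathcal C$ is rigid, closed under direct summands and fully contravariantly finite, then $(\mathcal C,\mathcal C^{\perp_1})$ is a cotorsion pair.
   Context: $(\mathcal B,\mathbb E,\mathfrak s)$ is an extriangulated category (Nakaoka–Palu); conflations $A\rightarrowtail B\twoheadrightarrow C$. Subcategories are full, additive, closed under isomorphisms and finite direct sums. $\mathcal C^{\perp_1}=\{B\mid \mathbb E(\mathcal C,B)=0\}$; $\mathcal C$ is rigid if $\mathbb E(\mathcal C,\mathcal C)=0$. $\mathcal C$ is fully contravariantly finite if every object admits a right $\mathcal C$-approximation which is a deflation. A cotorsion pair $(\mathcal U,\mathcal V)$ is a pair of subcategories closed under direct summands with $\mathbb E(\mathcal U,\mathcal V)=0$ such that every $B$ admits conflations $V_B\rightarrowtail U_B\twoheadrightarrow B$ and $B\rightarrowtail V^B\twoheadrightarrow U^B$ with $U_B,U^B\in\mathcal U$, $V_B,V^B\in\mathcal V$. *)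

theory Defs
  imports Main
begin

section \<open>Extriangulated categories (Nakaoka--Palu), encoded concretely\<close>

text \<open>A category with objects of type 'o and morphisms of type 'm, given by a set of
objects, a set of morphisms with source/target, composition (cmp g f = g o f) and identities.
The bifunctor E is given by a set of extensions of type 'e, each with its two ends:
ext_C d = C and ext_A d = A for d in E(C,A); with group operations and the actions
push a = a_* and pull c = c^*.  real d x y means that the sequence A -x-> B -y-> C
belongs to the equivalence class s(d).\<close>

record ('o, 'm, 'e) excat =
  Obj :: "'o set"
  Arr :: "'m set"
  src :: "'m \<Rightarrow> 'o"
  tgt :: "'m \<Rightarrow> 'o"
  cmp :: "'m \<Rightarrow> 'm \<Rightarrow> 'm"
  idm :: "'o \<Rightarrow> 'm"
  madd :: "'m \<Rightarrow> 'm \<Rightarrow> 'm"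
  mzero :: "'o \<Rightarrow> 'o \<Rightarrow> 'm"
  mneg :: "'m \<Rightarrow> 'm"
  Ext :: "'e set"
  ext_C :: "'e \<Rightarrow> 'o"
  ext_A :: "'e \<Rightarrow> 'o"
  eadd :: "'e \<Rightarrow> 'e \<Rightarrow> 'e"
  ezero :: "'o \<Rightarrow> 'o \<Rightarrow> 'e"
  eneg :: "'e \<Rightarrow> 'e"
  push :: "'m \<Rightarrow> 'e \<Rightarrow> 'e"
  pull :: "'m \<Rightarrow> 'e \<Rightarrow> 'e"
  real :: "'e \<Rightarrow> 'm \<Rightarrow> 'm \<Rightarrow> bool"

definition hom :: "('o,'m,'e) excat \<Rightarrow> 'o \<Rightarrow> 'o \<Rightarrow> 'm set" where
  "hom B X Y = {f \<in> Arr B. src B f = X \<and> tgt B f = Y}"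

definition E :: "('o,'m,'e) excat \<Rightarrow> 'o \<Rightarrow> 'o \<Rightarrow> 'e set" where
  "E B C A = {d \<in> Ext B. ext_C B d = C \<and> ext_A B d = A}"

definition category :: "('o,'m,'e) excat \<Rightarrow> bool" where
  "category B \<longleftrightarrow>
    (\<forall>f\<in>Arr B. src B f \<in> Obj B \<and> tgt B f \<in> Obj B) \<and>
    (\<forall>X\<in>Obj B. idm B X \<in> hom B X X) \<and>
    (\<forall>X Y Z f g. f \<in> hom B X Y \<longrightarrow> g \<in> hom B Y Z \<longrightarrow> cmp B g f \<in> hom B X Z) \<and>
    (\<forall>W X Y Z f g h. f \<in> hom B W X \<longrightarrow> g \<in> hom B X Y \<longrightarrow> h \<in> hom B Y Z \<longrightarrow>
        cmp B h (cmp B g f) = cmp B (cmp B h g) f) \<and>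
    (\<forall>X Y f. f \<in> hom B X Y \<longrightarrow> cmp B f (idm B X) = f \<and> cmp B (idm B Y) f = f)"

definition iso :: "('o,'m,'e) excat \<Rightarrow> 'm \<Rightarrow> bool" where
  "iso B f \<longleftrightarrow> f \<in> Arr B \<and> (\<exists>g \<in> hom B (tgt B f) (src B f).
      cmp B g f = idm B (src B f) \<and> cmp B f g = idm B (tgt B f))"

definition isomorphic :: "('o,'m,'e) excat \<Rightarrow> 'o \<Rightarrow> 'o \<Rightarrow> bool" where
  "isomorphic B X Y \<longleftrightarrow> (\<exists>f \<in> hom B X Y. iso B f)"

definition zero_object :: "('o,'m,'e) excat \<Rightarrow> 'o \<Rightarrow> bool" where
  "zero_object B Z \<longleftrightarrow> Z \<in> Obj B \<and> idm B Z = mzero B Z Z"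

definition biprod :: "('o,'m,'e) excat \<Rightarrow> 'o \<Rightarrow> 'o \<Rightarrow> 'o \<Rightarrow> 'm \<Rightarrow> 'm \<Rightarrow> 'm \<Rightarrow> 'm \<Rightarrow> bool" where
  "biprod B X Y S i1 i2 p1 p2 \<longleftrightarrow>
    S \<in> Obj B \<and> i1 \<in> hom B X S \<and> i2 \<in> hom B Y S \<and> p1 \<in> hom B S X \<and> p2 \<in> hom B S Y \<and>
    cmp B p1 i1 = idm B X \<and> cmp B p2 i2 = idm B Y \<and>
    cmp B p1 i2 = mzero B Y X \<and> cmp B p2 i1 = mzero B X Y \<and>
    madd B (cmp B i1 p1) (cmp B i2 p2) = idm B S"

definition additive_category :: "('o,'m,'e) excat \<Rightarrow> bool" where
  "additive_category B \<longleftrightarrow> category B \<and>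
    (\<forall>X\<in>Obj B. \<forall>Y\<in>Obj B. mzero B X Y \<in> hom B X Y \<and>
       (\<forall>f\<in>hom B X Y. \<forall>g\<in>hom B X Y. madd B f g \<in> hom B X Y) \<and>
       (\<forall>f\<in>hom B X Y. mneg B f \<in> hom B X Y) \<and>
       (\<forall>f\<in>hom B X Y. \<forall>g\<in>hom B X Y. \<forall>h\<in>hom B X Y.
           madd B (madd B f g) h = madd B f (madd B g h)) \<and>
       (\<forall>f\<in>hom B X Y. \<forall>g\<in>hom B X Y. madd B f g = madd B g f) \<and>
       (\<forall>f\<in>hom B X Y. madd B (mzero B X Y) f = f) \<and>
       (\<forall>f\<in>hom B X Y. madd B (mneg B f) f = mzero B X Y)) \<and>
    (\<forall>X Y Z f g h. f \<in> hom B X Y \<longrightarrow> g \<in> hom B X Y \<longrightarrow> h \<in> hom B Y Z \<longrightarrow>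
        cmp B h (madd B f g) = madd B (cmp B h f) (cmp B h g)) \<and>
    (\<forall>W X Y f g h. f \<in> hom B X Y \<longrightarrow> g \<in> hom B X Y \<longrightarrow> h \<in> hom B W X \<longrightarrow>
        cmp B (madd B f g) h = madd B (cmp B f h) (cmp B g h)) \<and>
    (\<exists>Z. zero_object B Z) \<and>
    (\<forall>X\<in>Obj B. \<forall>Y\<in>Obj B. \<exists>S i1 i2 p1 p2. biprod B X Y S i1 i2 p1 p2)"

definition biadditive_functor :: "('o,'m,'e) excat \<Rightarrow> bool" where
  "biadditive_functor B \<longleftrightarrow>
    (\<forall>d\<in>Ext B. ext_C B d \<in> Obj B \<and> ext_A B d \<in> Obj B) \<and>
    (\<forall>C\<in>Obj B. \<forall>A\<in>Obj B. ezero B C A \<in> E B C A \<and>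
       (\<forall>d\<in>E B C A. \<forall>d'\<in>E B C A. eadd B d d' \<in> E B C A) \<and>
       (\<forall>d\<in>E B C A. eneg B d \<in> E B C A) \<and>
       (\<forall>d\<in>E B C A. \<forall>d'\<in>E B C A. \<forall>d''\<in>E B C A.
           eadd B (eadd B d d') d'' = eadd B d (eadd B d' d'')) \<and>
       (\<forall>d\<in>E B C A. \<forall>d'\<in>E B C A. eadd B d d' = eadd B d' d) \<and>
       (\<forall>d\<in>E B C A. eadd B (ezero B C A) d = d) \<and>
       (\<forall>d\<in>E B C A. eadd B (eneg B d) d = ezero B C A)) \<and>
    (\<forall>C A A' a d. a \<in> hom B A A' \<longrightarrow> d \<in> E B C A \<longrightarrow> push B a d \<in> E B C A') \<and>
    (\<forall>C C' A c d. c \<in> hom B C' C \<longrightarrow> d \<in> E B C A \<longrightarrow> pull B c d \<in> E B C' A) \<and>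
    (\<forall>C A d. d \<in> E B C A \<longrightarrow> push B (idm B A) d = d \<and> pull B (idm B C) d = d) \<and>
    (\<forall>C A A' A'' a a' d. a \<in> hom B A A' \<longrightarrow> a' \<in> hom B A' A'' \<longrightarrow> d \<in> E B C A \<longrightarrow>
        push B (cmp B a' a) d = push B a' (push B a d)) \<and>
    (\<forall>C C' C'' A c c' d. c \<in> hom B C' C \<longrightarrow> c' \<in> hom B C'' C' \<longrightarrow> d \<in> E B C A \<longrightarrow>
        pull B (cmp B c c') d = pull B c' (pull B c d)) \<and>
    (\<forall>C C' A A' a c d. a \<in> hom B A A' \<longrightarrow> c \<in> hom B C' C \<longrightarrow> d \<in> E B C A \<longrightarrow>
        push B a (pull B c d) = pull B c (push B a d)) \<and>
    (\<forall>C A A' a d d'. a \<in> hom B A A' \<longrightarrow> d \<in> E B C A \<longrightarrow> d' \<in> E B C A \<longrightarrow>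
        push B a (eadd B d d') = eadd B (push B a d) (push B a d')) \<and>
    (\<forall>C C' A c d d'. c \<in> hom B C' C \<longrightarrow> d \<in> E B C A \<longrightarrow> d' \<in> E B C A \<longrightarrow>
        pull B c (eadd B d d') = eadd B (pull B c d) (pull B c d')) \<and>
    (\<forall>C A A' a a' d. a \<in> hom B A A' \<longrightarrow> a' \<in> hom B A A' \<longrightarrow> d \<in> E B C A \<longrightarrow>
        push B (madd B a a') d = eadd B (push B a d) (push B a' d)) \<and>
    (\<forall>C C' A c c' d. c \<in> hom B C' C \<longrightarrow> c' \<in> hom B C' C \<longrightarrow> d \<in> E B C A \<longrightarrow>
        pull B (madd B c c') d = eadd B (pull B c d) (pull B c' d))"

definition seq_equiv :: "('o,'m,'e) excat \<Rightarrow> 'm \<Rightarrow> 'm \<Rightarrow> 'm \<Rightarrow> 'm \<Rightarrow> bool" where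
  "seq_equiv B x y x' y' \<longleftrightarrow>
    x \<in> Arr B \<and> y \<in> Arr B \<and> x' \<in> Arr B \<and> y' \<in> Arr B \<and>
    tgt B x = src B y \<and> tgt B x' = src B y' \<and>
    src B x = src B x' \<and> tgt B y = tgt B y' \<and>
    (\<exists>b \<in> hom B (tgt B x) (tgt B x'). iso B b \<and> cmp B b x = x' \<and> cmp B y' b = y)"

definition msum :: "('o,'m,'e) excat \<Rightarrow> 'm \<Rightarrow> 'm \<Rightarrow> 'm \<Rightarrow> 'm \<Rightarrow> 'm \<Rightarrow> 'm \<Rightarrow> 'm" where
  "msum B x x' p1 p2 j1 j2 = madd B (cmp B j1 (cmp B x p1)) (cmp B j2 (cmp B x' p2))"

definition additive_realization :: "('o,'m,'e) excat \<Rightarrow> bool" where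
  "additive_realization B \<longleftrightarrow>
    (\<forall>d x y. real B d x y \<longrightarrow> d \<in> Ext B \<and> x \<in> Arr B \<and> y \<in> Arr B \<and>
        src B x = ext_A B d \<and> tgt B x = src B y \<and> tgt B y = ext_C B d) \<and>
    (\<forall>d\<in>Ext B. \<exists>x y. real B d x y) \<and>
    (\<forall>d x y x' y'. real B d x y \<longrightarrow> real B d x' y' \<longrightarrow> seq_equiv B x y x' y') \<and>
    (\<forall>d x y x' y'. real B d x y \<longrightarrow> seq_equiv B x y x' y' \<longrightarrow> real B d x' y') \<and>
    (\<forall>d d' x y x' y' a c.
        real B d x y \<longrightarrow> real B d' x' y' \<longrightarrow>
        a \<in> hom B (ext_A B d) (ext_A B d') \<longrightarrow> c \<in> hom B (ext_C B d) (ext_C B d') \<longrightarrow>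
        push B a d = pull B c d' \<longrightarrow>
        (\<exists>b \<in> hom B (tgt B x) (tgt B x'). cmp B b x = cmp B x' a \<and> cmp B y' b = cmp B c y)) \<and>
    (\<forall>C A S i1 i2 p1 p2. C \<in> Obj B \<longrightarrow> A \<in> Obj B \<longrightarrow> biprod B A C S i1 i2 p1 p2 \<longrightarrow>
        real B (ezero B C A) i1 p2) \<and>
    (\<forall>d d' x y x' y' SA iA1 iA2 pA1 pA2 SB iB1 iB2 pB1 pB2 SC iC1 iC2 pC1 pC2 t.
        real B d x y \<longrightarrow> real B d' x' y' \<longrightarrow>
        biprod B (ext_A B d) (ext_A B d') SA iA1 iA2 pA1 pA2 \<longrightarrow>
        biprod B (tgt B x) (tgt B x') SB iB1 iB2 pB1 pB2 \<longrightarrow>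
        biprod B (ext_C B d) (ext_C B d') SC iC1 iC2 pC1 pC2 \<longrightarrow>
        t \<in> E B SC SA \<longrightarrow>
        push B pA1 (pull B iC1 t) = d \<longrightarrow>
        push B pA1 (pull B iC2 t) = ezero B (ext_C B d') (ext_A B d) \<longrightarrow>
        push B pA2 (pull B iC1 t) = ezero B (ext_C B d) (ext_A B d') \<longrightarrow>
        push B pA2 (pull B iC2 t) = d' \<longrightarrow>
        real B t (msum B x x' pA1 pA2 iB1 iB2) (msum B y y' pB1 pB2 iC1 iC2))"

definition ET3 :: "('o,'m,'e) excat \<Rightarrow> bool" where
  "ET3 B \<longleftrightarrow>
    (\<forall>d d' x y x' y' a b.
        real B d x y \<longrightarrow> real B d' x' y' \<longrightarrow>
        a \<in> hom B (ext_A B d) (ext_A B d') \<longrightarrow> b \<in> hom B (tgt B x) (tgt B x') \<longrightarrow>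
        cmp B b x = cmp B x' a \<longrightarrow>
        (\<exists>c \<in> hom B (ext_C B d) (ext_C B d'). cmp B c y = cmp B y' b \<and> push B a d = pull B c d'))"

definition ET3op :: "('o,'m,'e) excat \<Rightarrow> bool" where
  "ET3op B \<longleftrightarrow>
    (\<forall>d d' x y x' y' b c.
        real B d x y \<longrightarrow> real B d' x' y' \<longrightarrow>
        b \<in> hom B (tgt B x) (tgt B x') \<longrightarrow> c \<in> hom B (ext_C B d) (ext_C B d') \<longrightarrow>
        cmp B y' b = cmp B c y \<longrightarrow>
        (\<exists>a \<in> hom B (ext_A B d) (ext_A B d'). cmp B x' a = cmp B b x \<and> push B a d = pull B c d'))"

definition ET4 :: "('o,'m,'e) excat \<Rightarrow> bool" where
  "ET4 B \<longleftrightarrow>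
    (\<forall>d d' f f' g g'.
        real B d f f' \<longrightarrow> real B d' g g' \<longrightarrow> tgt B f = ext_A B d' \<longrightarrow>
        (\<exists>Eo dm em d'' h'.
            Eo \<in> Obj B \<and>
            dm \<in> hom B (ext_C B d) Eo \<and> em \<in> hom B Eo (ext_C B d') \<and>
            d'' \<in> E B Eo (ext_A B d) \<and> h' \<in> hom B (tgt B g) Eo \<and>
            real B d'' (cmp B g f) h' \<and>
            cmp B h' g = cmp B dm f' \<and> cmp B em h' = g' \<and>
            real B (push B f' d') dm em \<and>
            pull B dm d'' = d \<and> push B f d'' = pull B em d'))"

definition ET4op :: "('o,'m,'e) excat \<Rightarrow> bool" where
  "ET4op B \<longleftrightarrow>
    (\<forall>d d' f f' g g'.
        real B d f' f \<longrightarrow> real B d' g' g \<longrightarrow> tgt B g = src B f \<longrightarrow>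
        (\<exists>Eo dm em d'' h'.
            Eo \<in> Obj B \<and>
            dm \<in> hom B Eo (ext_A B d) \<and> em \<in> hom B (ext_A B d') Eo \<and>
            d'' \<in> E B (ext_C B d) Eo \<and> h' \<in> hom B Eo (src B g) \<and>
            real B d'' h' (cmp B f g) \<and>
            cmp B f' dm = cmp B g h' \<and> cmp B h' em = g' \<and>
            real B (pull B f' d') em dm \<and>
            push B dm d'' = d \<and> pull B f d'' = push B em d'))"

definition extriangulated :: "('o,'m,'e) excat \<Rightarrow> bool" where
  "extriangulated B \<longleftrightarrow> additive_category B \<and> biadditive_functor B \<and>
     additive_realization B \<and> ET3 B \<and> ET3op B \<and> ET4 B \<and> ET4op B"

definition conflation :: "('o,'m,'e) excat \<Rightarrow> 'm \<Rightarrow> 'm \<Rightarrow> bool" where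
  "conflation B x y \<longleftrightarrow> (\<exists>d. real B d x y)"

definition deflation :: "('o,'m,'e) excat \<Rightarrow> 'm \<Rightarrow> bool" where
  "deflation B y \<longleftrightarrow> (\<exists>x. conflation B x y)"

definition injective_obj :: "('o,'m,'e) excat \<Rightarrow> 'o \<Rightarrow> bool" where
  "injective_obj B I \<longleftrightarrow> I \<in> Obj B \<and>
    (\<forall>x y a. conflation B x y \<longrightarrow> a \<in> hom B (src B x) I \<longrightarrow>
        (\<exists>b \<in> hom B (tgt B x) I. cmp B b x = a))"

definition enough_injectives :: "('o,'m,'e) excat \<Rightarrow> bool" where
  "enough_injectives B \<longleftrightarrow>
    (\<forall>X\<in>Obj B. \<exists>x y. conflation B x y \<and> src B x = X \<and> injective_obj B (tgt B x))"

text \<open>Standing convention: subcategories are full, additive, closed under isomorphisms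
and finite direct sums (in particular contain a zero object).\<close>
definition subcategory :: "('o,'m,'e) excat \<Rightarrow> 'o set \<Rightarrow> bool" where
  "subcategory B \<X> \<longleftrightarrow> \<X> \<subseteq> Obj B \<and>
    (\<forall>X Y. X \<in> \<X> \<longrightarrow> isomorphic B X Y \<longrightarrow> Y \<in> \<X>) \<and>
    (\<exists>Z\<in>\<X>. zero_object B Z) \<and>
    (\<forall>X Y S i1 i2 p1 p2. X \<in> \<X> \<longrightarrow> Y \<in> \<X> \<longrightarrow> biprod B X Y S i1 i2 p1 p2 \<longrightarrow> S \<in> \<X>)"

definition closed_under_summands :: "('o,'m,'e) excat \<Rightarrow> 'o set \<Rightarrow> bool" where
  "closed_under_summands B \<X> \<longleftrightarrow>
    (\<forall>X Y S i1 i2 p1 p2. biprod B X Y S i1 i2 p1 p2 \<longrightarrow> S \<in> \<X> \<longrightarrow> X \<in> \<X> \<and> Y \<in> \<X>)"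

definition rigid :: "('o,'m,'e) excat \<Rightarrow> 'o set \<Rightarrow> bool" where
  "rigid B \<X> \<longleftrightarrow> (\<forall>C\<in>\<X>. \<forall>C'\<in>\<X>. E B C C' = {ezero B C C'})"

definition perp1 :: "('o,'m,'e) excat \<Rightarrow> 'o set \<Rightarrow> 'o set" where
  "perp1 B \<X> = {Y \<in> Obj B. \<forall>C\<in>\<X>. E B C Y = {ezero B C Y}}"

definition right_approximation :: "('o,'m,'e) excat \<Rightarrow> 'o set \<Rightarrow> 'm \<Rightarrow> 'o \<Rightarrow> bool" where
  "right_approximation B \<X> f X \<longleftrightarrow> f \<in> Arr B \<and> tgt B f = X \<and> src B f \<in> \<X> \<and>
    (\<forall>C\<in>\<X>. \<forall>g \<in> hom B C X. \<exists>h \<in> hom B C (src B f). cmp B f h = g)"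

definition fully_contravariantly_finite :: "('o,'m,'e) excat \<Rightarrow> 'o set \<Rightarrow> bool" where
  "fully_contravariantly_finite B \<X> \<longleftrightarrow>
    (\<forall>X\<in>Obj B. \<exists>f. right_approximation B \<X> f X \<and> deflation B f)"

definition cotorsion_pair :: "('o,'m,'e) excat \<Rightarrow> 'o set \<Rightarrow> 'o set \<Rightarrow> bool" where
  "cotorsion_pair B \<U> \<V> \<longleftrightarrow>
    subcategory B \<U> \<and> subcategory B \<V> \<and>
    closed_under_summands B \<U> \<and> closed_under_summands B \<V> \<and>
    (\<forall>U\<in>\<U>. \<forall>V\<in>\<V>. E B U V = {ezero B U V}) \<and>
    (\<forall>X\<in>Obj B.
       (\<exists>x y. conflation B x y \<and> tgt B y = X \<and> src B x \<in> \<V> \<and> tgt B x \<in> \<U>) \<and>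
       (\<exists>x y. conflation B x y \<and> src B x = X \<and> tgt B x \<in> \<V> \<and> tgt B y \<in> \<U>))"

end

theory Submission
  imports Defs
begin

text \<open>
  Rigidity of \<open>\<C>\<close> together with the long exact sequence of \<open>E(C, -)\<close> attached to a conflation
  shows that the cocone \<open>K\<close> of a deflation \<open>C\<^sub>0 \<twoheadrightarrow> X\<close> which is a right \<open>\<C>\<close>-approximation lies in
  \<open>\<C>\<^sup>\<perp>\<^sub>1\<close>: an extension of \<open>C \<in> \<C>\<close> by \<open>K\<close> dies in \<open>E(C, C\<^sub>0) = 0\<close>, hence is pulled back from
  the conflation along some \<open>C \<rightarrow> X\<close>, which factors through \<open>C\<^sub>0 \<twoheadrightarrow> X\<close> and so kills it.
  For the second conflation embed \<open>X \<rightarrowtail> I \<twoheadrightarrow> Y\<close> with \<open>I\<close> injective and pull it back along a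
  right \<open>\<C>\<close>-approximation \<open>C\<^sub>0 \<rightarrow> Y\<close>, giving \<open>X \<rightarrowtail> V \<twoheadrightarrow> C\<^sub>0\<close>; the same diagram chase, using
  \<open>E(C, I) = 0\<close> and (ET4) for exactness at the middle term, shows \<open>V \<in> \<C>\<^sup>\<perp>\<^sub>1\<close>.
  The closure properties of \<open>\<C>\<^sup>\<perp>\<^sub>1\<close> are formal consequences of biadditivity of \<open>E\<close>.
\<close>

locale extriangulated_category =
  fixes B :: "('o, 'm, 'e) excat"
  assumes extriangulated: "extriangulated B"
begin

lemma additive_category: "additive_category B"
  and biadditive_functor: "biadditive_functor B"
  and additive_realization: "additive_realization B"
  and ET3: "ET3 B" and ET3op: "ET3op B" and ET4: "ET4 B"
  using extriangulated unfolding extriangulated_def by simp_all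

lemma category: "category B"
  using additive_category unfolding additive_category_def by (rule conjunct1)

lemma hom_iff: "f \<in> hom B X Y \<longleftrightarrow> f \<in> Arr B \<and> src B f = X \<and> tgt B f = Y"
  by (simp add: hom_def)

lemma E_iff: "d \<in> E B C A \<longleftrightarrow> d \<in> Ext B \<and> ext_C B d = C \<and> ext_A B d = A"
  by (simp add: E_def)

lemma Arr_Obj: "f \<in> Arr B \<Longrightarrow> src B f \<in> Obj B \<and> tgt B f \<in> Obj B"
  and idm_hom: "X \<in> Obj B \<Longrightarrow> idm B X \<in> hom B X X"
  and cmp_hom: "f \<in> hom B X Y \<Longrightarrow> g \<in> hom B Y Z \<Longrightarrow> cmp B g f \<in> hom B X Z"
  and cmp_assoc: "f \<in> hom B W X \<Longrightarrow> g \<in> hom B X Y \<Longrightarrow> h \<in> hom B Y Z \<Longrightarrow>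
        cmp B h (cmp B g f) = cmp B (cmp B h g) f"
  and cmp_idm_left: "f \<in> hom B X Y \<Longrightarrow> cmp B (idm B Y) f = f"
  and cmp_idm_right: "f \<in> hom B X Y \<Longrightarrow> cmp B f (idm B X) = f"
  using category unfolding category_def by metis+

lemma hom_Obj: "f \<in> hom B X Y \<Longrightarrow> X \<in> Obj B \<and> Y \<in> Obj B"
  using Arr_Obj by (auto simp: hom_iff)

lemma mzero_hom: "X \<in> Obj B \<Longrightarrow> Y \<in> Obj B \<Longrightarrow> mzero B X Y \<in> hom B X Y"
  using additive_category[unfolded additive_category_def, THEN conjunct2, THEN conjunct1]
  by blast

lemma madd_mzero: "X \<in> Obj B \<Longrightarrow> Y \<in> Obj B \<Longrightarrow> f \<in> hom B X Y \<Longrightarrow> madd B (mzero B X Y) f = f"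
  using additive_category[unfolded additive_category_def, THEN conjunct2, THEN conjunct1]
  by blast

lemma zero_object_exists: "\<exists>Z. zero_object B Z"
  using additive_category[unfolded additive_category_def,
      THEN conjunct2, THEN conjunct2, THEN conjunct2, THEN conjunct2, THEN conjunct1] .

lemma biprod_exists: "X \<in> Obj B \<Longrightarrow> Y \<in> Obj B \<Longrightarrow> \<exists>S i1 i2 p1 p2. biprod B X Y S i1 i2 p1 p2"
  using additive_category[unfolded additive_category_def,
      THEN conjunct2, THEN conjunct2, THEN conjunct2, THEN conjunct2, THEN conjunct2]
  by blast

lemma Ext_Obj: "d \<in> Ext B \<Longrightarrow> ext_C B d \<in> Obj B \<and> ext_A B d \<in> Obj B"
  using biadditive_functor[unfolded biadditive_functor_def, THEN conjunct1] by blast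

lemma E_Obj: "d \<in> E B C A \<Longrightarrow> C \<in> Obj B \<and> A \<in> Obj B"
  using Ext_Obj by (auto simp: E_iff)

lemma ezero_E: "C \<in> Obj B \<Longrightarrow> A \<in> Obj B \<Longrightarrow> ezero B C A \<in> E B C A"
  and eneg_E: "C \<in> Obj B \<Longrightarrow> A \<in> Obj B \<Longrightarrow> d \<in> E B C A \<Longrightarrow> eneg B d \<in> E B C A"
  and eadd_assoc: "C \<in> Obj B \<Longrightarrow> A \<in> Obj B \<Longrightarrow>
        d \<in> E B C A \<Longrightarrow> d' \<in> E B C A \<Longrightarrow> d'' \<in> E B C A \<Longrightarrow>
        eadd B (eadd B d d') d'' = eadd B d (eadd B d' d'')"
  and eadd_ezero: "C \<in> Obj B \<Longrightarrow> A \<in> Obj B \<Longrightarrow> d \<in> E B C A \<Longrightarrow> eadd B (ezero B C A) d = d"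
  and eadd_eneg: "C \<in> Obj B \<Longrightarrow> A \<in> Obj B \<Longrightarrow> d \<in> E B C A \<Longrightarrow> eadd B (eneg B d) d = ezero B C A"
  using biadditive_functor[unfolded biadditive_functor_def, THEN conjunct2, THEN conjunct1]
  by blast+

lemma push_E: "a \<in> hom B A A' \<Longrightarrow> d \<in> E B C A \<Longrightarrow> push B a d \<in> E B C A'"
  using biadditive_functor[unfolded biadditive_functor_def,
      THEN conjunct2, THEN conjunct2, THEN conjunct1] by blast

lemma pull_E: "c \<in> hom B C' C \<Longrightarrow> d \<in> E B C A \<Longrightarrow> pull B c d \<in> E B C' A"
  using biadditive_functor[unfolded biadditive_functor_def,
      THEN conjunct2, THEN conjunct2, THEN conjunct2, THEN conjunct1] by blast

lemma push_idm: "d \<in> E B C A \<Longrightarrow> push B (idm B A) d = d"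
  and pull_idm: "d \<in> E B C A \<Longrightarrow> pull B (idm B C) d = d"
  using biadditive_functor[unfolded biadditive_functor_def,
      THEN conjunct2, THEN conjunct2, THEN conjunct2, THEN conjunct2, THEN conjunct1] by blast+

lemma push_cmp: "a \<in> hom B A A' \<Longrightarrow> a' \<in> hom B A' A'' \<Longrightarrow> d \<in> E B C A \<Longrightarrow>
    push B (cmp B a' a) d = push B a' (push B a d)"
  using biadditive_functor[unfolded biadditive_functor_def,
      THEN conjunct2, THEN conjunct2, THEN conjunct2, THEN conjunct2, THEN conjunct2,
      THEN conjunct1] by blast

lemma pull_cmp: "c \<in> hom B C' C \<Longrightarrow> c' \<in> hom B C'' C' \<Longrightarrow> d \<in> E B C A \<Longrightarrow>
    pull B (cmp B c c') d = pull B c' (pull B c d)"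
  using biadditive_functor[unfolded biadditive_functor_def,
      THEN conjunct2, THEN conjunct2, THEN conjunct2, THEN conjunct2, THEN conjunct2,
      THEN conjunct2, THEN conjunct1] by blast

lemma push_pull: "a \<in> hom B A A' \<Longrightarrow> c \<in> hom B C' C \<Longrightarrow> d \<in> E B C A \<Longrightarrow>
    push B a (pull B c d) = pull B c (push B a d)"
  using biadditive_functor[unfolded biadditive_functor_def,
      THEN conjunct2, THEN conjunct2, THEN conjunct2, THEN conjunct2, THEN conjunct2,
      THEN conjunct2, THEN conjunct2, THEN conjunct1] by blast

lemma push_eadd: "a \<in> hom B A A' \<Longrightarrow> d \<in> E B C A \<Longrightarrow> d' \<in> E B C A \<Longrightarrow>
    push B a (eadd B d d') = eadd B (push B a d) (push B a d')"
  using biadditive_functor[unfolded biadditive_functor_def,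
      THEN conjunct2, THEN conjunct2, THEN conjunct2, THEN conjunct2, THEN conjunct2,
      THEN conjunct2, THEN conjunct2, THEN conjunct2, THEN conjunct1] by blast

lemma pull_eadd: "c \<in> hom B C' C \<Longrightarrow> d \<in> E B C A \<Longrightarrow> d' \<in> E B C A \<Longrightarrow>
    pull B c (eadd B d d') = eadd B (pull B c d) (pull B c d')"
  using biadditive_functor[unfolded biadditive_functor_def,
      THEN conjunct2, THEN conjunct2, THEN conjunct2, THEN conjunct2, THEN conjunct2,
      THEN conjunct2, THEN conjunct2, THEN conjunct2, THEN conjunct2, THEN conjunct1] by blast

lemma push_madd: "a \<in> hom B A A' \<Longrightarrow> a' \<in> hom B A A' \<Longrightarrow> d \<in> E B C A \<Longrightarrow>
    push B (madd B a a') d = eadd B (push B a d) (push B a' d)"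
  using biadditive_functor[unfolded biadditive_functor_def,
      THEN conjunct2, THEN conjunct2, THEN conjunct2, THEN conjunct2, THEN conjunct2,
      THEN conjunct2, THEN conjunct2, THEN conjunct2, THEN conjunct2, THEN conjunct2,
      THEN conjunct1] by blast

lemma real_props: "real B d x y \<Longrightarrow> d \<in> Ext B \<and> x \<in> Arr B \<and> y \<in> Arr B \<and>
    src B x = ext_A B d \<and> tgt B x = src B y \<and> tgt B y = ext_C B d"
  using additive_realization[unfolded additive_realization_def, THEN conjunct1] by blast

lemma real_exists: "d \<in> Ext B \<Longrightarrow> \<exists>x y. real B d x y"
  using additive_realization[unfolded additive_realization_def,
      THEN conjunct2, THEN conjunct1] by blast

lemma real_seq_equiv: "real B d x y \<Longrightarrow> real B d x' y' \<Longrightarrow> seq_equiv B x y x' y'"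
  using additive_realization[unfolded additive_realization_def,
      THEN conjunct2, THEN conjunct2, THEN conjunct1] by blast

lemma real_morphism: "real B d x y \<Longrightarrow> real B d' x' y' \<Longrightarrow>
    a \<in> hom B (ext_A B d) (ext_A B d') \<Longrightarrow> c \<in> hom B (ext_C B d) (ext_C B d') \<Longrightarrow>
    push B a d = pull B c d' \<Longrightarrow>
    \<exists>b \<in> hom B (tgt B x) (tgt B x'). cmp B b x = cmp B x' a \<and> cmp B y' b = cmp B c y"
  using additive_realization[unfolded additive_realization_def,
      THEN conjunct2, THEN conjunct2, THEN conjunct2, THEN conjunct2, THEN conjunct1] by blast

lemma real_ezero_biprod: "C \<in> Obj B \<Longrightarrow> A \<in> Obj B \<Longrightarrow> biprod B A C S i1 i2 p1 p2 \<Longrightarrow>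
    real B (ezero B C A) i1 p2"
  using additive_realization[unfolded additive_realization_def,
      THEN conjunct2, THEN conjunct2, THEN conjunct2, THEN conjunct2, THEN conjunct2,
      THEN conjunct1] by blast

lemma ET3_rule: "real B d x y \<Longrightarrow> real B d' x' y' \<Longrightarrow>
    a \<in> hom B (ext_A B d) (ext_A B d') \<Longrightarrow> b \<in> hom B (tgt B x) (tgt B x') \<Longrightarrow>
    cmp B b x = cmp B x' a \<Longrightarrow>
    \<exists>c \<in> hom B (ext_C B d) (ext_C B d'). cmp B c y = cmp B y' b \<and> push B a d = pull B c d'"
  using ET3 unfolding ET3_def by blast

lemma ET3op_rule: "real B d x y \<Longrightarrow> real B d' x' y' \<Longrightarrow>
    b \<in> hom B (tgt B x) (tgt B x') \<Longrightarrow> c \<in> hom B (ext_C B d) (ext_C B d') \<Longrightarrow>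
    cmp B y' b = cmp B c y \<Longrightarrow>
    \<exists>a \<in> hom B (ext_A B d) (ext_A B d'). cmp B x' a = cmp B b x \<and> push B a d = pull B c d'"
  using ET3op unfolding ET3op_def by blast

lemma ET4_rule: "real B d f f' \<Longrightarrow> real B d' g g' \<Longrightarrow> tgt B f = ext_A B d' \<Longrightarrow>
    \<exists>Eo dm em d'' h'. Eo \<in> Obj B \<and>
      dm \<in> hom B (ext_C B d) Eo \<and> em \<in> hom B Eo (ext_C B d') \<and>
      d'' \<in> E B Eo (ext_A B d) \<and> h' \<in> hom B (tgt B g) Eo \<and>
      real B d'' (cmp B g f) h' \<and> cmp B h' g = cmp B dm f' \<and> cmp B em h' = g' \<and>
      real B (push B f' d') dm em \<and> pull B dm d'' = d \<and> push B f d'' = pull B em d'"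
  using ET4 unfolding ET4_def by blast

lemma biprod_homs: "biprod B X Y S i1 i2 p1 p2 \<Longrightarrow>
    i1 \<in> hom B X S \<and> i2 \<in> hom B Y S \<and> p1 \<in> hom B S X \<and> p2 \<in> hom B S Y \<and>
    cmp B p1 i1 = idm B X \<and> cmp B p2 i2 = idm B Y"
  unfolding biprod_def by blast

lemma real_homs:
  assumes "real B d x y"
  shows "x \<in> hom B (src B x) (tgt B x)" "y \<in> hom B (tgt B x) (tgt B y)"
    "src B x \<in> Obj B" "tgt B x \<in> Obj B" "tgt B y \<in> Obj B"
    "d \<in> E B (tgt B y) (src B x)" "ext_A B d = src B x" "ext_C B d = tgt B y"
    "src B y = tgt B x"
  using real_props[OF assms] Arr_Obj[of x] Arr_Obj[of y] by (auto simp: hom_iff E_iff)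

subsection \<open>Zero extensions\<close>

lemma eadd_idem_imp_ezero:
  assumes "C \<in> Obj B" "A \<in> Obj B" "d \<in> E B C A" "eadd B d d = d"
  shows "d = ezero B C A"
proof -
  have "d = eadd B (eadd B (eneg B d) d) d" using assms by (simp add: eadd_eneg eadd_ezero)
  also have "\<dots> = eadd B (eneg B d) (eadd B d d)" using assms by (simp add: eadd_assoc eneg_E)
  also have "\<dots> = ezero B C A" using assms by (simp add: eadd_eneg)
  finally show ?thesis .
qed

lemma push_ezero:
  assumes "a \<in> hom B A A'" "C \<in> Obj B"
  shows "push B a (ezero B C A) = ezero B C A'"
proof -
  let ?z = "ezero B C A"
  have Obj: "A \<in> Obj B" "A' \<in> Obj B" using hom_Obj assms by auto
  then have z: "?z \<in> E B C A" using assms ezero_E by auto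
  have "push B a ?z = push B a (eadd B ?z ?z)" using z Obj assms by (simp add: eadd_ezero)
  also have "\<dots> = eadd B (push B a ?z) (push B a ?z)" using push_eadd assms z by blast
  finally show ?thesis using eadd_idem_imp_ezero Obj assms push_E z by metis
qed

lemma pull_ezero:
  assumes "c \<in> hom B C' C" "A \<in> Obj B"
  shows "pull B c (ezero B C A) = ezero B C' A"
proof -
  let ?z = "ezero B C A"
  have Obj: "C \<in> Obj B" "C' \<in> Obj B" using hom_Obj assms by auto
  then have z: "?z \<in> E B C A" using assms ezero_E by auto
  have "pull B c ?z = pull B c (eadd B ?z ?z)" using z Obj assms by (simp add: eadd_ezero)
  also have "\<dots> = eadd B (pull B c ?z) (pull B c ?z)" using pull_eadd assms z by blast
  finally show ?thesis using eadd_idem_imp_ezero Obj assms pull_E z by metis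
qed

lemma push_mzero:
  assumes "A \<in> Obj B" "A' \<in> Obj B" "d \<in> E B C A"
  shows "push B (mzero B A A') d = ezero B C A'"
proof -
  let ?p = "push B (mzero B A A') d"
  have m: "mzero B A A' \<in> hom B A A'" using assms mzero_hom by auto
  have "?p = push B (madd B (mzero B A A') (mzero B A A')) d" using madd_mzero assms m by simp
  also have "\<dots> = eadd B ?p ?p" using push_madd m assms by blast
  finally show ?thesis using eadd_idem_imp_ezero E_Obj assms push_E m by metis
qed

text \<open>Both follow from (ET3)/(ET3\<open>\<^sup>o\<^sup>p\<close>) applied against the split conflation realizing \<open>0\<close>.\<close>

lemma pull_deflation_ezero:
  assumes r: "real B \<delta> x y"
  shows "pull B y \<delta> = ezero B (tgt B x) (src B x)"
proof -
  let ?z = "ezero B (tgt B x) (src B x)"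
  note h = real_homs[OF r]
  obtain S i1 i2 p1 p2 where bp: "biprod B (src B x) (tgt B x) S i1 i2 p1 p2"
    using biprod_exists h by blast
  have split: "real B ?z i1 p2" using real_ezero_biprod[OF _ _ bp] h by blast
  have z: "?z \<in> E B (tgt B x) (src B x)" using ezero_E h by blast
  have p2: "p2 \<in> hom B (tgt B i1) (tgt B x)" using biprod_homs[OF bp] by (auto simp: hom_iff)
  have y: "y \<in> hom B (ext_C B ?z) (ext_C B \<delta>)" using z h by (auto simp: E_iff)
  obtain a where a: "a \<in> hom B (ext_A B ?z) (ext_A B \<delta>)" and eq: "push B a ?z = pull B y \<delta>"
    using ET3op_rule[OF split r p2 y] by blast
  have "a \<in> hom B (src B x) (src B x)" using a z h by (auto simp: E_iff)
  then show ?thesis using eq push_ezero h by simp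
qed

lemma push_inflation_ezero:
  assumes r: "real B \<delta> x y"
  shows "push B x \<delta> = ezero B (tgt B y) (tgt B x)"
proof -
  let ?z = "ezero B (tgt B y) (tgt B x)"
  note h = real_homs[OF r]
  obtain S i1 i2 p1 p2 where bp: "biprod B (tgt B x) (tgt B y) S i1 i2 p1 p2"
    using biprod_exists h by blast
  have split: "real B ?z i1 p2" using real_ezero_biprod[OF _ _ bp] h by blast
  have z: "?z \<in> E B (tgt B y) (tgt B x)" using ezero_E h by blast
  have x: "x \<in> hom B (ext_A B \<delta>) (ext_A B ?z)" using z h by (auto simp: E_iff)
  have i1: "i1 \<in> hom B (tgt B x) (tgt B i1)" using biprod_homs[OF bp] by (auto simp: hom_iff)
  obtain c where c: "c \<in> hom B (ext_C B \<delta>) (ext_C B ?z)" and eq: "push B x \<delta> = pull B c ?z"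
    using ET3_rule[OF r split x i1] by blast
  have "c \<in> hom B (tgt B y) (tgt B y)" using c z h by (auto simp: E_iff)
  then show ?thesis using eq pull_ezero h by simp
qed

lemma injective_obj_E_trivial:
  assumes I: "injective_obj B I" and C: "C \<in> Obj B"
  shows "E B C I = {ezero B C I}"
proof -
  have IObj: "I \<in> Obj B" using I unfolding injective_obj_def by blast
  have "d = ezero B C I" if d: "d \<in> E B C I" for d
  proof -
    obtain a b where r: "real B d a b" using real_exists d unfolding E_iff by blast
    note h = real_homs[OF r]
    have src_a: "src B a = I" using h d by (auto simp: E_iff)
    then obtain s where s: "s \<in> hom B (tgt B a) I" "cmp B s a = idm B I"
      using I r idm_hom[OF IObj] unfolding injective_obj_def conflation_def by metis
    have a: "a \<in> hom B I (tgt B a)" using h src_a by simp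
    have "d = push B (cmp B s a) d" using push_idm[OF d] s by simp
    also have "\<dots> = push B s (push B a d)" using push_cmp[OF a s(1) d] .
    also have "\<dots> = ezero B C I" using push_inflation_ezero[OF r] push_ezero[OF s(1) C] h d
      by (auto simp: E_iff)
    finally show ?thesis .
  qed
  then show ?thesis using ezero_E[OF C IObj] by blast
qed

subsection \<open>The long exact sequence of \<open>E(C', -)\<close>\<close>

text \<open>For \<open>\<delta>\<close> realized by \<open>A \<rightarrowtail> B \<twoheadrightarrow> C\<close>, the sequence
  \<open>Hom(C', C) \<rightarrow> E(C', A) \<rightarrow> E(C', B) \<rightarrow> E(C', C)\<close>, with first map \<open>c \<mapsto> c\<^sup>* \<delta>\<close>, is exact.\<close>

lemma exact_Hom_Ext_Ext:
  assumes r: "real B \<delta> x y" and C: "C' \<in> Obj B" and d: "d \<in> E B C' (src B x)"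
    and z: "push B x d = ezero B C' (tgt B x)"
  shows "\<exists>c \<in> hom B C' (tgt B y). d = pull B c \<delta>"
proof -
  let ?z = "ezero B C' (tgt B x)"
  note h = real_homs[OF r]
  obtain a b where ra: "real B d a b" using real_exists d unfolding E_iff by blast
  note ha = real_homs[OF ra]
  have sa: "src B a = src B x" "tgt B b = C'" using ha d by (auto simp: E_iff)
  obtain S i1 i2 p1 p2 where bp: "biprod B (tgt B x) C' S i1 i2 p1 p2"
    using biprod_exists h C by blast
  note bh = biprod_homs[OF bp]
  have split: "real B ?z i1 p2" using real_ezero_biprod[OF _ _ bp] h C by blast
  have zE: "?z \<in> E B C' (tgt B x)" using ezero_E h C by blast
  have x: "x \<in> hom B (ext_A B d) (ext_A B ?z)" using zE h sa ha by (auto simp: E_iff)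
  have idC: "idm B C' \<in> hom B (ext_C B d) (ext_C B ?z)" using zE idm_hom C d by (auto simp: E_iff)
  have "push B x d = pull B (idm B C') ?z" using z pull_idm zE by simp
  then obtain \<beta> where \<beta>: "\<beta> \<in> hom B (tgt B a) S" "cmp B \<beta> a = cmp B i1 x"
    using real_morphism[OF ra split x idC] bh by (auto simp: hom_iff)
  \<comment> \<open>the first component of \<open>\<beta>\<close> extends \<open>x\<close> along \<open>a\<close>, so (ET3) yields \<open>c\<close> with \<open>d = c\<^sup>* \<delta>\<close>\<close>
  define e where "e = cmp B p1 \<beta>"
  have e: "e \<in> hom B (tgt B a) (tgt B x)" unfolding e_def using cmp_hom \<beta> bh by blast
  have a: "a \<in> hom B (src B x) (tgt B a)" using ha sa by simp
  have "cmp B e a = cmp B p1 (cmp B \<beta> a)" unfolding e_def using cmp_assoc a \<beta> bh by metis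
  also have "\<dots> = cmp B (cmp B p1 i1) x" using \<beta>(2) cmp_assoc h(1) bh by metis
  also have "\<dots> = cmp B x (idm B (src B x))" using bh cmp_idm_left cmp_idm_right h by simp
  finally have ea: "cmp B e a = cmp B x (idm B (src B x))" .
  have idA: "idm B (src B x) \<in> hom B (ext_A B d) (ext_A B \<delta>)" using idm_hom h sa ha by simp
  obtain c where "c \<in> hom B (ext_C B d) (ext_C B \<delta>)" "push B (idm B (src B x)) d = pull B c \<delta>"
    using ET3_rule[OF ra r idA e ea] by blast
  then show ?thesis using push_idm[OF d] d h by (auto simp: E_iff)
qed

lemma exact_Ext_Ext_Ext:
  assumes r: "real B \<epsilon> v w" and e: "e \<in> E B C' (tgt B v)"
    and z: "push B w e = ezero B C' (tgt B w)"
  shows "\<exists>e0 \<in> E B C' (src B v). e = push B v e0"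
proof -
  note h = real_homs[OF r]
  have C: "C' \<in> Obj B" using e E_Obj by blast
  obtain a b where ra: "real B e a b" using real_exists e unfolding E_iff by blast
  note ha = real_homs[OF ra]
  obtain Eo dm em d'' where
     dm: "dm \<in> hom B (ext_C B \<epsilon>) Eo" and em: "em \<in> hom B Eo (ext_C B e)"
     and d'': "d'' \<in> E B Eo (ext_A B \<epsilon>)"
     and rr: "real B (push B w e) dm em" and pe: "push B v d'' = pull B em e"
    using ET4_rule[OF r ra] ha e by (auto simp: E_iff)
  have em': "em \<in> hom B Eo C'" and d3: "d'' \<in> E B Eo (src B v)"
    using em d'' h e by (auto simp: E_iff)
  \<comment> \<open>\<open>w\<^sub>* e = 0\<close> makes \<open>em\<close> a split deflation; a section \<open>s\<close> of it pulls \<open>v\<^sub>* d''\<close> back to \<open>e\<close>\<close>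
  obtain S i1 i2 p1 p2 where bp: "biprod B (tgt B w) C' S i1 i2 p1 p2"
    using biprod_exists h C by blast
  note bh = biprod_homs[OF bp]
  have split: "real B (ezero B C' (tgt B w)) i1 p2" using real_ezero_biprod[OF _ _ bp] h C by blast
  have "real B (ezero B C' (tgt B w)) dm em" using rr z by simp
  then obtain \<beta> where "\<beta> \<in> hom B (tgt B i1) (tgt B dm)" and p2: "cmp B em \<beta> = p2"
    using real_seq_equiv[OF split] unfolding seq_equiv_def by blast
  then have \<beta>: "\<beta> \<in> hom B S Eo" "cmp B em \<beta> = p2" using bh dm by (auto simp: hom_iff)
  define s where "s = cmp B \<beta> i2"
  have s: "s \<in> hom B C' Eo" unfolding s_def using cmp_hom \<beta> bh by blast
  have "cmp B em s = cmp B (cmp B em \<beta>) i2" unfolding s_def using cmp_assoc bh \<beta> em' by blast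
  then have split_em: "cmp B em s = idm B C'" using \<beta> bh by simp
  have "e = pull B (cmp B em s) e" using pull_idm e split_em by simp
  also have "\<dots> = pull B s (push B v d'')" using pull_cmp[OF em' s e] pe by simp
  also have "\<dots> = push B v (pull B s d'')" using push_pull[OF _ s d3] h by simp
  finally show ?thesis using pull_E[OF s d3] by blast
qed

subsection \<open>The right perpendicular category\<close>

lemma perp1I:
  assumes "Y \<in> Obj B" "\<And>C d. C \<in> \<C> \<Longrightarrow> d \<in> E B C Y \<Longrightarrow> d = ezero B C Y"
    and "\<C> \<subseteq> Obj B"
  shows "Y \<in> perp1 B \<C>"
  using assms ezero_E unfolding perp1_def by blast

lemma perp1D: "Y \<in> perp1 B \<C> \<Longrightarrow> C \<in> \<C> \<Longrightarrow> d \<in> E B C Y \<Longrightarrow> d = ezero B C Y"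
  unfolding perp1_def by blast

lemma perp1_Obj: "Y \<in> perp1 B \<C> \<Longrightarrow> Y \<in> Obj B"
  unfolding perp1_def by blast

lemma perp1_closed_under_retracts:
  assumes "\<C> \<subseteq> Obj B" and X: "X \<in> perp1 B \<C>"
    and s: "s \<in> hom B Y X" and r: "r \<in> hom B X Y" and rs: "cmp B r s = idm B Y"
  shows "Y \<in> perp1 B \<C>"
proof (rule perp1I)
  fix C d assume C: "C \<in> \<C>" and d: "d \<in> E B C Y"
  have "d = push B (cmp B r s) d" using push_idm d rs by simp
  also have "\<dots> = push B r (push B s d)" using push_cmp[OF s r d] .
  also have "\<dots> = ezero B C Y"
    using perp1D[OF X C push_E[OF s d]] push_ezero[OF r] E_Obj d by simp
  finally show "d = ezero B C Y" .
qed (use assms hom_Obj in auto)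

lemma zero_object_in_perp1:
  assumes "\<C> \<subseteq> Obj B" and Z: "zero_object B Z"
  shows "Z \<in> perp1 B \<C>"
proof (rule perp1I)
  show Zobj: "Z \<in> Obj B" using Z unfolding zero_object_def by blast
  fix C d assume d: "d \<in> E B C Z"
  have "d = push B (mzero B Z Z) d" using push_idm[OF d] Z unfolding zero_object_def by simp
  then show "d = ezero B C Z" using push_mzero[OF Zobj Zobj d] by simp
qed (use assms in auto)

lemma perp1_closed_under_biprod:
  assumes "\<C> \<subseteq> Obj B" and X: "X \<in> perp1 B \<C>" and Y: "Y \<in> perp1 B \<C>"
    and bp: "biprod B X Y S i1 i2 p1 p2"
  shows "S \<in> perp1 B \<C>"
proof (rule perp1I)
  have i1: "i1 \<in> hom B X S" and i2: "i2 \<in> hom B Y S"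
    and p1: "p1 \<in> hom B S X" and p2: "p2 \<in> hom B S Y"
    and sum: "madd B (cmp B i1 p1) (cmp B i2 p2) = idm B S" and SObj: "S \<in> Obj B"
    using bp unfolding biprod_def by blast+
  then show "S \<in> Obj B" by blast
  fix C d assume C: "C \<in> \<C>" and d: "d \<in> E B C S"
  have CObj: "C \<in> Obj B" using E_Obj d by blast
  have "push B p1 d = ezero B C X" using perp1D[OF X C push_E[OF p1 d]] .
  then have h1: "push B (cmp B i1 p1) d = ezero B C S"
    using push_cmp[OF p1 i1 d] push_ezero[OF i1 CObj] by simp
  have "push B p2 d = ezero B C Y" using perp1D[OF Y C push_E[OF p2 d]] .
  then have h2: "push B (cmp B i2 p2) d = ezero B C S"
    using push_cmp[OF p2 i2 d] push_ezero[OF i2 CObj] by simp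
  have "d = push B (madd B (cmp B i1 p1) (cmp B i2 p2)) d" using push_idm[OF d] sum by simp
  also have "\<dots> = ezero B C S"
    using push_madd[OF cmp_hom[OF p1 i1] cmp_hom[OF p2 i2] d] h1 h2
      eadd_ezero[OF CObj SObj ezero_E[OF CObj SObj]] by simp
  finally show "d = ezero B C S" .
qed (use assms in auto)

lemma subcategory_perp1:
  assumes "\<C> \<subseteq> Obj B"
  shows "subcategory B (perp1 B \<C>)"
  unfolding subcategory_def
proof (intro conjI allI impI)
  show "perp1 B \<C> \<subseteq> Obj B" using perp1_Obj by blast
  show "\<exists>Z\<in>perp1 B \<C>. zero_object B Z"
    using zero_object_exists zero_object_in_perp1[OF assms] by blast
next
  fix X Y assume X: "X \<in> perp1 B \<C>" and "isomorphic B X Y"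
  then obtain f g where "f \<in> hom B X Y" "g \<in> hom B Y X" "cmp B f g = idm B Y"
    unfolding isomorphic_def iso_def by (auto simp: hom_iff)
  then show "Y \<in> perp1 B \<C>" using perp1_closed_under_retracts[OF assms X] by blast
next
  fix X Y S i1 i2 p1 p2
  assume "X \<in> perp1 B \<C>" "Y \<in> perp1 B \<C>" "biprod B X Y S i1 i2 p1 p2"
  then show "S \<in> perp1 B \<C>" using perp1_closed_under_biprod[OF assms] by blast
qed

lemma closed_under_summands_perp1:
  assumes "\<C> \<subseteq> Obj B"
  shows "closed_under_summands B (perp1 B \<C>)"
  unfolding closed_under_summands_def
proof (intro allI impI conjI)
  fix X Y S i1 i2 p1 p2 assume "biprod B X Y S i1 i2 p1 p2" and S: "S \<in> perp1 B \<C>"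
  note bh = biprod_homs[OF this(1)]
  show "X \<in> perp1 B \<C>" using perp1_closed_under_retracts[OF assms S] bh by blast
  show "Y \<in> perp1 B \<C>" using perp1_closed_under_retracts[OF assms S] bh by blast
qed

subsection \<open>Approximation conflations\<close>

lemma rigidD: "rigid B \<C> \<Longrightarrow> C \<in> \<C> \<Longrightarrow> C' \<in> \<C> \<Longrightarrow> d \<in> E B C C' \<Longrightarrow> d = ezero B C C'"
  unfolding rigid_def by blast

lemma cocone_of_approximation_in_perp1:
  assumes \<C>: "\<C> \<subseteq> Obj B" and rigid: "rigid B \<C>"
    and f: "right_approximation B \<C> f X" and r: "real B \<delta> x f"
  shows "src B x \<in> perp1 B \<C>"
proof (rule perp1I)
  note h = real_homs[OF r]
  have tgt_f: "tgt B f = X" and C0: "src B f \<in> \<C>"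
    using f unfolding right_approximation_def by auto
  show "src B x \<in> Obj B" using h by blast
  fix C d assume C: "C \<in> \<C>" and d: "d \<in> E B C (src B x)"
  have "push B x d = ezero B C (tgt B x)"
    using rigidD[OF rigid C C0] push_E[OF h(1) d] h by simp
  then obtain c where c: "c \<in> hom B C X" "d = pull B c \<delta>"
    using exact_Hom_Ext_Ext[OF r _ d] C \<C> tgt_f by blast
  obtain g where g: "g \<in> hom B C (tgt B x)" "cmp B f g = c"
    using f C c h unfolding right_approximation_def by auto
  have "d = pull B g (pull B f \<delta>)" using c g pull_cmp[OF h(2) g(1) h(6)] by simp
  also have "\<dots> = ezero B C (src B x)" using pull_deflation_ezero[OF r] pull_ezero[OF g(1) h(3)] by simp
  finally show "d = ezero B C (src B x)" .
qed (use \<C> in auto)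

lemma conflation_from_perp1_onto:
  assumes "\<C> \<subseteq> Obj B" "rigid B \<C>" "fully_contravariantly_finite B \<C>" "X \<in> Obj B"
  shows "\<exists>x y. conflation B x y \<and> tgt B y = X \<and> src B x \<in> perp1 B \<C> \<and> tgt B x \<in> \<C>"
proof -
  obtain f x \<delta> where f: "right_approximation B \<C> f X" and r: "real B \<delta> x f"
    using assms unfolding fully_contravariantly_finite_def deflation_def conflation_def by blast
  then have "tgt B f = X" "tgt B x \<in> \<C>"
    using real_homs[OF r] unfolding right_approximation_def by auto
  then show ?thesis
    using cocone_of_approximation_in_perp1[OF assms(1,2) f r] r unfolding conflation_def by blast
qed

text \<open>Here \<open>X \<rightarrowtail> V \<twoheadrightarrow> C\<^sub>0\<close> is the pullback along \<open>q\<close> of a conflation \<open>X \<rightarrowtail> I \<twoheadrightarrow> Y\<close> with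
  \<open>I\<close> injective.\<close>

lemma pullback_along_approximation_in_perp1:
  assumes \<C>: "\<C> \<subseteq> Obj B" and rigid: "rigid B \<C>"
    and r1: "real B \<delta> i p" and I: "injective_obj B (tgt B i)"
    and q: "right_approximation B \<C> q (tgt B p)" and r: "real B (pull B q \<delta>) v w"
  shows "tgt B v \<in> perp1 B \<C>"
proof (rule perp1I)
  note h1 = real_homs[OF r1] and h = real_homs[OF r]
  have qh: "q \<in> hom B (src B q) (tgt B p)" and C0: "src B q \<in> \<C>"
    using q unfolding right_approximation_def by (auto simp: hom_iff)
  have \<epsilon>: "pull B q \<delta> \<in> E B (src B q) (src B i)" using pull_E[OF qh h1(6)] .
  then have src_v: "src B v = src B i" and tgt_w: "tgt B w = src B q" using h by (auto simp: E_iff)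
  show "tgt B v \<in> Obj B" using h by blast
  fix C e assume C: "C \<in> \<C>" and e: "e \<in> E B C (tgt B v)"
  have CObj: "C \<in> Obj B" using C \<C> by blast
  have "push B w e = ezero B C (tgt B w)"
    using rigidD[OF rigid C C0] push_E[OF h(2) e] tgt_w by simp
  then obtain e0 where e0: "e0 \<in> E B C (src B i)" "e = push B v e0"
    using exact_Ext_Ext_Ext[OF r e] src_v by auto
  have "push B i e0 = ezero B C (tgt B i)"
    using injective_obj_E_trivial[OF I CObj] push_E[OF h1(1) e0(1)] by blast
  then obtain c where c: "c \<in> hom B C (tgt B p)" "e0 = pull B c \<delta>"
    using exact_Hom_Ext_Ext[OF r1 CObj e0(1)] by blast
  obtain g where g: "g \<in> hom B C (src B q)" "cmp B q g = c"
    using q C c unfolding right_approximation_def by blast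
  have "e = push B v (pull B g (pull B q \<delta>))" using e0 c g pull_cmp[OF qh g(1) h1(6)] by simp
  also have "\<dots> = pull B g (push B v (pull B q \<delta>))" using push_pull[OF h(1) _ h(6)] g tgt_w by simp
  also have "\<dots> = ezero B C (tgt B v)"
    using push_inflation_ezero[OF r] pull_ezero[OF _ h(4)] g tgt_w by simp
  finally show "e = ezero B C (tgt B v)" .
qed (use \<C> in auto)

lemma conflation_into_perp1_from:
  assumes "\<C> \<subseteq> Obj B" "rigid B \<C>" "fully_contravariantly_finite B \<C>"
    and "enough_injectives B" "X \<in> Obj B"
  shows "\<exists>x y. conflation B x y \<and> src B x = X \<and> tgt B x \<in> perp1 B \<C> \<and> tgt B y \<in> \<C>"
proof -
  obtain i p \<delta> where r1: "real B \<delta> i p" and "src B i = X" and I: "injective_obj B (tgt B i)"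
    using assms(4,5) unfolding enough_injectives_def conflation_def by blast
  obtain q where q: "right_approximation B \<C> q (tgt B p)"
    using assms(3) real_homs[OF r1] unfolding fully_contravariantly_finite_def by blast
  have qh: "q \<in> hom B (src B q) (tgt B p)" "src B q \<in> \<C>"
    using q unfolding right_approximation_def by (auto simp: hom_iff)
  have \<epsilon>: "pull B q \<delta> \<in> E B (src B q) (src B i)" using pull_E[OF qh(1) real_homs(6)[OF r1]] .
  then obtain v w where r: "real B (pull B q \<delta>) v w" using real_exists unfolding E_iff by blast
  then have "conflation B v w" "src B v = src B i" "tgt B w = src B q"
    using real_homs[OF r] \<epsilon> unfolding conflation_def by (auto simp: E_iff)
  then show ?thesis
    using pullback_along_approximation_in_perp1[OF assms(1,2) r1 I q r] qh \<open>src B i = X\<close> by metis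
qed

end

theorem mainTheorem4:
  fixes B :: "('o, 'm, 'e) excat" and \<C> :: "'o set"
  assumes "extriangulated B"
    and "enough_injectives B"
    and "subcategory B \<C>"
    and "rigid B \<C>"
    and "closed_under_summands B \<C>"
    and "fully_contravariantly_finite B \<C>"
  shows "cotorsion_pair B \<C> (perp1 B \<C>)"
proof -
  interpret extriangulated_category B using assms(1) by unfold_locales
  have \<C>: "\<C> \<subseteq> Obj B" using assms(3) unfolding subcategory_def by blast
  have "\<forall>U\<in>\<C>. \<forall>V\<in>perp1 B \<C>. E B U V = {ezero B U V}"
    unfolding perp1_def by blast
  then show ?thesis
    unfolding cotorsion_pair_def
    using assms(3,5) subcategory_perp1[OF \<C>] closed_under_summands_perp1[OF \<C>]
      conflation_from_perp1_onto[OF \<C> assms(4,6)]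
      conflation_into_perp1_from[OF \<C> assms(4,6,2)]
    by blast
qed

end
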